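(* Let $n\ge 1$, $b_i>0$, $\alpha_i>0$ for $i=1,\dots,n$, and $g(t)=b_1e^{-\alpha_1 t}-\sum_{i=2}^n b_ie^{-\alpha_i t}$. Suppose that $$2(\alpha_1-\alpha_j)^2\ge\max_{1\le i\le n}(\alpha_i-\alpha_j)^2\quad\text{for all } j\ge 2.$$ Then $g\,\mathds{1}_{[0,\infty)}$ is nonnegative if and only if $g\,\mathds{1}_{[0,\infty)}$ is log-concave.
   Context: A function $f:\mathbb{R}\to\mathbb{R}_{\ge0}$ is log-concave if $f(\lambda x+(1-\lambda)y)\ge f(x)^\lambda f(y)^{1-\lambda}$ for all $x,y\in\mathbb{R}$ and $\lambda\in[0,1]$ (equivalently $\log f$ is concave as a function into $\mathbb{R}\cup\{-\infty\}$). *)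

theory Defs
  imports Complex_Main
begin

text \<open>Note Isabelle's convention 0 powr a = 0 (also for a = 0); this only affects the
  trivial endpoint cases lambda = 0, 1, where the inequality holds anyway.\<close>
definition log_concave :: "(real \<Rightarrow> real) \<Rightarrow> bool" where
  "log_concave f \<longleftrightarrow> (\<forall>x. 0 \<le> f x) \<and>
     (\<forall>x y l. 0 \<le> l \<and> l \<le> 1 \<longrightarrow>
        f (l * x + (1 - l) * y) \<ge> f x powr l * f y powr (1 - l))"

end

theory Submission
  imports Defs "HOL-Analysis.Analysis"
begin

(* Write g t = exp (- \<alpha> 1 * t) * h t with h t = b 1 - (\<Sum>i=2..n. b i * exp ((\<alpha> 1 - \<alpha> i) * t)).
   As b i > 0, h is a constant minus a sum of convex functions, hence concave. A concave
   function that is nonnegative on a convex set S is log-concave once extended by 0 outside S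
   (weighted AM-GM), and products of log-concave functions are log-concave. *)

lemma log_concave_mult:
  assumes "log_concave f" "log_concave g"
  shows "log_concave (\<lambda>t. f t * g t)"
  unfolding log_concave_def
proof (intro conjI allI impI)
  fix x show "0 \<le> f x * g x"
    using assms by (simp add: log_concave_def)
next
  fix x y l :: real
  assume l: "0 \<le> l \<and> l \<le> 1"
  have "(f x * g x) powr l * (f y * g y) powr (1 - l)
      = (f x powr l * f y powr (1 - l)) * (g x powr l * g y powr (1 - l))"
    using assms by (simp add: log_concave_def powr_mult)
  also have "\<dots> \<le> f (l * x + (1 - l) * y) * g (l * x + (1 - l) * y)"
    using assms l by (intro mult_mono) (auto simp: log_concave_def)
  finally show "(f x * g x) powr l * (f y * g y) powr (1 - l)
      \<le> f (l * x + (1 - l) * y) * g (l * x + (1 - l) * y)" .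
qed

lemma log_concave_exp_linear: "log_concave (\<lambda>t. exp (c * t))"
  unfolding log_concave_def
  by (simp add: powr_def algebra_simps flip: exp_add)

lemma convex_on_exp_linear: "convex_on UNIV (\<lambda>t. exp (c * t))"
proof (rule convex_onI)
  fix t x y :: real
  assume "0 < t" "t < 1"
  then show "exp (c * ((1 - t) *\<^sub>R x + t *\<^sub>R y)) \<le> (1 - t) * exp (c * x) + t * exp (c * y)"
    using convex_onD[OF exp_convex, of t "c * x" "c * y"] by (simp add: algebra_simps)
qed simp

lemma convex_on_sum_fun:
  assumes "finite I" "convex S" "\<And>i. i \<in> I \<Longrightarrow> convex_on S (f i)"
  shows "convex_on S (\<lambda>x. \<Sum>i\<in>I. f i x)"
  using assms by (induction I rule: finite_induct) (auto simp: convex_on_const)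

lemma powr_weighted_le_weighted_sum:
  fixes a b l :: real
  assumes "0 \<le> a" "0 \<le> b" "0 \<le> l" "l \<le> 1"
  shows "a powr l * b powr (1 - l) \<le> l * a + (1 - l) * b"
proof (cases "a = 0 \<or> b = 0")
  case False
  then show ?thesis
    using assms Youngs_inequality_0[of l "1 - l" a b] by simp
qed (use assms in auto)

lemma log_concave_restrict_concave:
  fixes h :: "real \<Rightarrow> real"
  assumes concave: "concave_on S h" and nonneg: "\<And>t. t \<in> S \<Longrightarrow> 0 \<le> h t"
  shows "log_concave (\<lambda>t. if t \<in> S then h t else 0)"
  unfolding log_concave_def
proof (intro conjI allI impI)
  fix x show "0 \<le> (if x \<in> S then h x else 0)"
    using nonneg by simp
next
  fix x y l :: real
  assume l: "0 \<le> l \<and> l \<le> 1"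
  define z where "z = l * x + (1 - l) * y"
  show "(if x \<in> S then h x else 0) powr l * (if y \<in> S then h y else 0) powr (1 - l)
      \<le> (if l * x + (1 - l) * y \<in> S then h (l * x + (1 - l) * y) else 0)"
  proof (cases "x \<in> S \<and> y \<in> S")
    case True
    have "z \<in> S"
      using convexD[OF concave_on_imp_convex[OF concave], of x y l "1 - l"] True l
      by (simp add: z_def)
    have "h x powr l * h y powr (1 - l) \<le> l * h x + (1 - l) * h y"
      using True l nonneg by (intro powr_weighted_le_weighted_sum) auto
    also have "\<dots> \<le> h z"
      using concave_onD[OF concave, of "1 - l" x y] True l by (simp add: z_def)
    finally show ?thesis
      using True \<open>z \<in> S\<close> by (simp add: z_def)
  qed (use nonneg in auto)
qed

theorem lemma7:
  fixes n :: nat and b \<alpha> :: "nat \<Rightarrow> real" and g :: "real \<Rightarrow> real"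
  assumes "n \<ge> 1"
    and "\<And>i. i \<in> {1..n} \<Longrightarrow> b i > 0"
    and "\<And>i. i \<in> {1..n} \<Longrightarrow> \<alpha> i > 0"
    and "\<And>t. g t = b 1 * exp (- \<alpha> 1 * t) - (\<Sum>i=2..n. b i * exp (- \<alpha> i * t))"
    and "\<And>j. j \<in> {2..n} \<Longrightarrow>
           2 * (\<alpha> 1 - \<alpha> j)^2 \<ge> Max ((\<lambda>i. (\<alpha> i - \<alpha> j)^2) ` {1..n})"
  shows "(\<forall>t. (if t \<ge> 0 then g t else 0) \<ge> 0) \<longleftrightarrow>
         log_concave (\<lambda>t. if t \<ge> 0 then g t else 0)"
proof
  assume "log_concave (\<lambda>t. if t \<ge> 0 then g t else 0)"
  then show "\<forall>t. (if t \<ge> 0 then g t else 0) \<ge> 0"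
    by (simp add: log_concave_def)
next
  assume g_nonneg: "\<forall>t. (if t \<ge> 0 then g t else 0) \<ge> 0"
  define h where "h t = b 1 - (\<Sum>i=2..n. b i * exp ((\<alpha> 1 - \<alpha> i) * t))" for t
  have factor: "g t = exp (- \<alpha> 1 * t) * h t" for t
    unfolding assms(4) h_def
    by (simp add: right_diff_distrib sum_distrib_left algebra_simps flip: exp_add)
  have "convex_on UNIV (\<lambda>t. \<Sum>i=2..n. b i * exp ((\<alpha> 1 - \<alpha> i) * t))"
    using assms(2) by (intro convex_on_sum_fun convex_on_cmul convex_on_exp_linear) (auto intro: less_imp_le)
  then have "concave_on {0..} h"
    unfolding h_def
    by (intro concave_on_diff) (auto simp: concave_on_const intro: convex_on_subset)
  moreover have "0 \<le> h t" if "t \<in> {0..}" for t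
    using g_nonneg[rule_format, of t] that by (simp add: factor zero_le_mult_iff)
  ultimately have "log_concave (\<lambda>t. exp (- \<alpha> 1 * t) * (if t \<in> {0..} then h t else 0))"
    by (intro log_concave_mult log_concave_exp_linear log_concave_restrict_concave)
  also have "(\<lambda>t. exp (- \<alpha> 1 * t) * (if t \<in> {0..} then h t else 0))
      = (\<lambda>t. if t \<ge> 0 then g t else 0)"
    by (auto simp: factor)
  finally show "log_concave (\<lambda>t. if t \<ge> 0 then g t else 0)" .
qed

end
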